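(* Let $G$ be a nice graph, $V_4$ the set of vertices of degree at least four in $G$, $\mathcal{P}$ a path partition of $G$, $\mathcal{P}_4\subseteq\mathcal{P}$ the subfamily of paths visiting at least one vertex of $V_4$, $\ell\in\mathbb{N}$, and $(\mathcal{T},d)$ a $(G,V_4,\ell)$-pattern encoding $\mathcal{P}_4$. Then $|\mathcal{P}|\ge \frac{\mathrm{odd}(G)+\mathrm{odd}(\mathcal{T},d)}{2}+|\mathcal{T}|.$
   Context: A path partition of $G$ is a collection of pairwise edge-disjoint paths whose edge sets together cover $E(G)$. $\mathrm{odd}(H)$ is the number of odd-degree vertices of $H$. Graphs are finite, simple, undirected; subcubic means maximum degree $\le 3$. A pan cycle of $G$ is a cycle with a unique vertex of degree $3$ in $G$, the others of degree $2$ in $G$; a bull cycle is a cycle with exactly two vertices of degree $3$ in $G$, the others of degree $2$ in $G$. $G$ is nice if it is connected, not subcubic, has no pan cycles, and all bull cycles are triangles. $N_G[S]$, $N_G(S)$ denote closed/open neighbourhoods. Terminal collection for a family $\mathcal{Q}$ of edge-disjoint paths: a set $U\subseteq V(G)$ with $N_G[V_4]\subseteq U$, containing both endpoints of every path of $\mathcal{Q}$, and such that for all $u,v\in U$, if two distinct paths of $\mathcal{Q}$ both visit $u$ and $v$, then one of them visits another vertex of $U$ between $u$ and $v$. Traces: $X_\ell=\{x_1,\dots,x_\ell\}$ is a set of variables. A $(G,V_4,\ell)$-trace is a sequence over $N_G[V_4]\cup X_\ell$ with no repeated symbol and no variable adjacent to a symbol of $V_4$. $\mathsf{edges}(T)$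 is the set of unordered consecutive pairs of $T$ containing a symbol of $V_4$; $\mathsf{ends}(T)$ is the set of other unordered consecutive pairs. $\deg_T(y)$ is $0$ if $y$ does not occur in $T$, $1$ if $y$ is the first or last element of $T$, $2$ otherwise. Pattern: a pair $(\mathcal{T},d)$, $\mathcal{T}$ a collection of $(G,V_4,\ell)$-traces, $d\colon X_\ell\to\{1,2,3\}$, with: the sets $\mathsf{ends}(T)$ pairwise disjoint and the sets $\mathsf{edges}(T)$ pairwise disjoint over distinct $T\in\mathcal{T}$; $\bigcup_T\mathsf{edges}(T)$ equals the set of edges incident to $V_4$; $\sum_T\deg_T(x_i)\le d(x_i)$ for all $x_i$; $\sum_T\deg_T(v)\le\deg_G(v)$ for all $v\in N_G(V_4)$. Encoding: $(\mathcal{T},d)$ encodes a family $\mathcal{Q}$ of edge-disjoint paths if for some terminal collection $U$ for $\mathcal{Q}$, with $V_X=U\setminus N_G[V_4]$, $\ell=|V_X|$ and a bijection $f\colon X_\ell\to V_X$, $\mathcal{T}$ consists of one trace $T_P$ per $P\in\mathcal{Q}$, obtained by orienting $P$, listing in order its vertices in $N_G[V_4]\cup V_X$ and replacing each $v\in V_X$ by $f^{-1}(v)$, and $d(x_i)=\deg_G(f(x_i))$. Odd number of a pattern: for $y\in N_G[V_4]\cup X_\ell$ let $D(y)=\deg_G(y)$ if $y\in N_G[V_4]$ and $D(y)=d(y)$ if $y\in X_\ell$; $y$ gains oddity if $D(y)$ is even and $\sum_{T}\deg_T(y)$ is odd, and loses oddity if $D(y)$ is odd and $\sum_T\deg_T(y)$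 is odd. $\mathrm{odd}(\mathcal{T},d)$ is the number of elements gaining oddity minus the number losing oddity. *)

theory Defs
  imports Complex_Main
begin

definition graph :: "'a set \<Rightarrow> 'a set set \<Rightarrow> bool" where
  "graph V E \<longleftrightarrow> finite V \<and> (\<forall>e\<in>E. \<exists>u v. e = {u, v} \<and> u \<noteq> v \<and> u \<in> V \<and> v \<in> V)"

definition deg :: "'a set set \<Rightarrow> 'a \<Rightarrow> nat" where
  "deg E v = card {e\<in>E. v \<in> e}"

definition odd_vertices :: "'a set \<Rightarrow> 'a set set \<Rightarrow> nat" where
  "odd_vertices V E = card {v\<in>V. odd (deg E v)}"

definition connected_graph :: "'a set \<Rightarrow> 'a set set \<Rightarrow> bool" where
  "connected_graph V E \<longleftrightarrow> (\<forall>u\<in>V. \<forall>v\<in>V. (u, v) \<in> {(x, y). {x, y} \<in> E}\<^sup>*)"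

definition subcubic :: "'a set \<Rightarrow> 'a set set \<Rightarrow> bool" where
  "subcubic V E \<longleftrightarrow> (\<forall>v\<in>V. deg E v \<le> 3)"

definition closed_nbhd :: "'a set \<Rightarrow> 'a set set \<Rightarrow> 'a set \<Rightarrow> 'a set" where
  "closed_nbhd V E S = S \<union> {v\<in>V. \<exists>u\<in>S. {u, v} \<in> E}"

definition open_nbhd :: "'a set \<Rightarrow> 'a set set \<Rightarrow> 'a set \<Rightarrow> 'a set" where
  "open_nbhd V E S = closed_nbhd V E S - S"

definition V4 :: "'a set \<Rightarrow> 'a set set \<Rightarrow> 'a set" where
  "V4 V E = {v\<in>V. 4 \<le> deg E v}"

definition is_cycle :: "'a set \<Rightarrow> 'a set set \<Rightarrow> 'a list \<Rightarrow> bool" where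
  "is_cycle V E cs \<longleftrightarrow> 3 \<le> length cs \<and> distinct cs \<and> set cs \<subseteq> V \<and>
     (\<forall>i<length cs. {cs ! i, cs ! ((i + 1) mod length cs)} \<in> E)"

definition pan_cycle :: "'a set \<Rightarrow> 'a set set \<Rightarrow> 'a list \<Rightarrow> bool" where
  "pan_cycle V E cs \<longleftrightarrow> is_cycle V E cs \<and>
     card {v \<in> set cs. deg E v = 3} = 1 \<and>
     (\<forall>v\<in>set cs. deg E v = 2 \<or> deg E v = 3)"

definition bull_cycle :: "'a set \<Rightarrow> 'a set set \<Rightarrow> 'a list \<Rightarrow> bool" where
  "bull_cycle V E cs \<longleftrightarrow> is_cycle V E cs \<and>
     card {v \<in> set cs. deg E v = 3} = 2 \<and>
     (\<forall>v\<in>set cs. deg E v = 2 \<or> deg E v = 3)"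

definition nice :: "'a set \<Rightarrow> 'a set set \<Rightarrow> bool" where
  "nice V E \<longleftrightarrow> connected_graph V E \<and> \<not> subcubic V E \<and>
     (\<forall>cs. \<not> pan_cycle V E cs) \<and>
     (\<forall>cs. bull_cycle V E cs \<longrightarrow> length cs = 3)"

definition is_path :: "'a set \<Rightarrow> 'a set set \<Rightarrow> 'a list \<Rightarrow> bool" where
  "is_path V E P \<longleftrightarrow> 2 \<le> length P \<and> distinct P \<and> set P \<subseteq> V \<and>
     (\<forall>i. Suc i < length P \<longrightarrow> {P ! i, P ! Suc i} \<in> E)"

definition path_edges :: "'a list \<Rightarrow> 'a set set" where
  "path_edges P = {{P ! i, P ! Suc i} | i. Suc i < length P}"

definition path_partition :: "'a set \<Rightarrow> 'a set set \<Rightarrow> 'a list set \<Rightarrow> bool" where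
  "path_partition V E \<P> \<longleftrightarrow> (\<forall>P\<in>\<P>. is_path V E P) \<and>
     pairwise (\<lambda>P Q. path_edges P \<inter> path_edges Q = {}) \<P> \<and>
     \<Union> (path_edges ` \<P>) = E"

text \<open>Symbols: \<open>Inl v\<close> for a vertex v, \<open>Inr i\<close> for the variable x_i (1 \<le> i \<le> l).\<close>

definition symbols :: "'a set \<Rightarrow> 'a set set \<Rightarrow> nat \<Rightarrow> ('a + nat) set" where
  "symbols V E l = Inl ` closed_nbhd V E (V4 V E) \<union> Inr ` {1..l}"

definition is_var :: "('a + nat) \<Rightarrow> bool" where
  "is_var y \<longleftrightarrow> (\<exists>i. y = Inr i)"

definition is_trace :: "'a set \<Rightarrow> 'a set set \<Rightarrow> nat \<Rightarrow> ('a + nat) list \<Rightarrow> bool" where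
  "is_trace V E l T \<longleftrightarrow> distinct T \<and> set T \<subseteq> symbols V E l \<and>
     (\<forall>i. Suc i < length T \<longrightarrow>
        \<not> (is_var (T ! i) \<and> T ! Suc i \<in> Inl ` V4 V E) \<and>
        \<not> (T ! i \<in> Inl ` V4 V E \<and> is_var (T ! Suc i)))"

definition consec_pairs :: "('a + nat) list \<Rightarrow> ('a + nat) set set" where
  "consec_pairs T = {{T ! i, T ! Suc i} | i. Suc i < length T}"

definition trace_edges :: "'a set \<Rightarrow> 'a set set \<Rightarrow> ('a + nat) list \<Rightarrow> ('a + nat) set set" where
  "trace_edges V E T = {p \<in> consec_pairs T. p \<inter> Inl ` V4 V E \<noteq> {}}"

definition trace_ends :: "'a set \<Rightarrow> 'a set set \<Rightarrow> ('a + nat) list \<Rightarrow> ('a + nat) set set" where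
  "trace_ends V E T = consec_pairs T - trace_edges V E T"

definition trace_deg :: "('a + nat) list \<Rightarrow> ('a + nat) \<Rightarrow> nat" where
  "trace_deg T y = (if y \<notin> set T then 0 else if y = hd T \<or> y = last T then 1 else 2)"

definition is_pattern ::
  "'a set \<Rightarrow> 'a set set \<Rightarrow> nat \<Rightarrow> ('a + nat) list set \<Rightarrow> (nat \<Rightarrow> nat) \<Rightarrow> bool" where
  "is_pattern V E l \<T> d \<longleftrightarrow>
     (\<forall>T\<in>\<T>. is_trace V E l T) \<and>
     (\<forall>i\<in>{1..l}. d i \<in> {1, 2, 3}) \<and>
     pairwise (\<lambda>T T'. trace_ends V E T \<inter> trace_ends V E T' = {}) \<T> \<and>
     pairwise (\<lambda>T T'. trace_edges V E T \<inter> trace_edges V E T' = {}) \<T> \<and>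
     \<Union> (trace_edges V E ` \<T>) = (\<lambda>e. Inl ` e) ` {e\<in>E. e \<inter> V4 V E \<noteq> {}} \<and>
     (\<forall>i\<in>{1..l}. (\<Sum>T\<in>\<T>. trace_deg T (Inr i)) \<le> d i) \<and>
     (\<forall>v\<in>open_nbhd V E (V4 V E). (\<Sum>T\<in>\<T>. trace_deg T (Inl v)) \<le> deg E v)"

definition visits_between :: "'a set \<Rightarrow> 'a list \<Rightarrow> 'a \<Rightarrow> 'a \<Rightarrow> bool" where
  "visits_between U P u v \<longleftrightarrow>
     (\<exists>i j k. i < length P \<and> j < length P \<and> k < length P \<and>
        P ! i = u \<and> P ! k = v \<and> P ! j \<in> U \<and> (i < j \<and> j < k \<or> k < j \<and> j < i))"

definition terminal_collection :: "'a set \<Rightarrow> 'a set set \<Rightarrow> 'a list set \<Rightarrow> 'a set \<Rightarrow> bool" where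
  "terminal_collection V E \<Q> U \<longleftrightarrow> U \<subseteq> V \<and>
     closed_nbhd V E (V4 V E) \<subseteq> U \<and>
     (\<forall>P\<in>\<Q>. hd P \<in> U \<and> last P \<in> U) \<and>
     (\<forall>u\<in>U. \<forall>v\<in>U. u \<noteq> v \<longrightarrow> (\<forall>P\<in>\<Q>. \<forall>P'\<in>\<Q>.
        P \<noteq> P' \<and> u \<in> set P \<and> v \<in> set P \<and> u \<in> set P' \<and> v \<in> set P' \<longrightarrow>
        visits_between U P u v \<or> visits_between U P' u v))"

definition trace_of ::
  "'a set \<Rightarrow> 'a set set \<Rightarrow> 'a set \<Rightarrow> nat \<Rightarrow> (nat \<Rightarrow> 'a) \<Rightarrow> 'a list \<Rightarrow> ('a + nat) list" where
  "trace_of V E U l f P =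
     map (\<lambda>v. if v \<in> closed_nbhd V E (V4 V E) then Inl v else Inr (inv_into {1..l} f v))
         (filter (\<lambda>v. v \<in> U) P)"

definition encodes ::
  "'a set \<Rightarrow> 'a set set \<Rightarrow> nat \<Rightarrow> ('a + nat) list set \<Rightarrow> (nat \<Rightarrow> nat) \<Rightarrow> 'a list set \<Rightarrow> bool" where
  "encodes V E l \<T> d \<Q> \<longleftrightarrow>
     (\<exists>U f ori. terminal_collection V E \<Q> U \<and>
        l = card (U - closed_nbhd V E (V4 V E)) \<and>
        bij_betw f {1..l} (U - closed_nbhd V E (V4 V E)) \<and>
        inj_on (\<lambda>P. trace_of V E U l f (if ori P then P else rev P)) \<Q> \<and>
        \<T> = (\<lambda>P. trace_of V E U l f (if ori P then P else rev P)) ` \<Q> \<and>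
        (\<forall>i\<in>{1..l}. d i = deg E (f i)))"

definition pat_D :: "'a set set \<Rightarrow> (nat \<Rightarrow> nat) \<Rightarrow> ('a + nat) \<Rightarrow> nat" where
  "pat_D E d y = (case y of Inl v \<Rightarrow> deg E v | Inr i \<Rightarrow> d i)"

definition pat_S :: "('a + nat) list set \<Rightarrow> ('a + nat) \<Rightarrow> nat" where
  "pat_S \<T> y = (\<Sum>T\<in>\<T>. trace_deg T y)"

definition odd_pattern ::
  "'a set \<Rightarrow> 'a set set \<Rightarrow> nat \<Rightarrow> ('a + nat) list set \<Rightarrow> (nat \<Rightarrow> nat) \<Rightarrow> int" where
  "odd_pattern V E l \<T> d =
     int (card {y\<in>symbols V E l. even (pat_D E d y) \<and> odd (pat_S \<T> y)})
   - int (card {y\<in>symbols V E l. odd (pat_D E d y) \<and> odd (pat_S \<T> y)})"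

end

theory Submission
  imports Defs
begin

text \<open>Every vertex v has degree deg(v) = s(v) + h(v), where s and h count the edges at v
lying on paths of \<open>\<P>\<^sub>4\<close> and of \<open>\<P> - \<P>\<^sub>4\<close> respectively.
The encoding identifies the symbols of the pattern with the terminal vertices, and the degree
of a symbol in the pattern with s, so odd(\<T>,d) counts the vertices where s is odd, with sign
according to the parity of deg. A parity count then gives odd(G) + odd(\<T>,d) = #{v : h(v) odd},
and each vertex with h(v) odd is an end of one of the paths of \<open>\<P> - \<P>\<^sub>4\<close>,
of which there are \<open>|\<P>| - |\<T>|\<close>.\<close>

definition path_deg :: "'a list \<Rightarrow> 'a \<Rightarrow> nat" where
  "path_deg P v = card {e \<in> path_edges P. v \<in> e}"

lemma path_edges_Cons_Cons: "path_edges (a # b # P) = insert {a, b} (path_edges (b # P))"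
  unfolding path_edges_def
proof (intro set_eqI iffI)
  fix e assume "e \<in> {{(a # b # P) ! i, (a # b # P) ! Suc i} |i. Suc i < length (a # b # P)}"
  then show "e \<in> insert {a, b} {{(b # P) ! i, (b # P) ! Suc i} |i. Suc i < length (b # P)}"
    by (force simp: nth_Cons split: nat.splits)
next
  fix e assume "e \<in> insert {a, b} {{(b # P) ! i, (b # P) ! Suc i} |i. Suc i < length (b # P)}"
  then show "e \<in> {{(a # b # P) ! i, (a # b # P) ! Suc i} |i. Suc i < length (a # b # P)}"
    by (auto intro: exI[of _ 0] exI[of _ "Suc _"])
qed

lemma path_edges_subset_set: "e \<in> path_edges P \<Longrightarrow> e \<subseteq> set P"
  by (auto simp: path_edges_def)

lemma finite_path_edges: "finite (path_edges P)"
  unfolding path_edges_def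
  by (rule finite_image_set, rule finite_subset[of _ "{..<length P}"]) auto

lemma path_deg_eq:
  assumes "distinct P" "2 \<le> length P"
  shows "path_deg P v = (if v \<notin> set P then 0 else if v = hd P \<or> v = last P then 1 else 2)"
  using assms
proof (induction P rule: induct_list012)
  case (3 a b P)
  have "{a, b} \<notin> path_edges (b # P)"
    using path_edges_subset_set "3.prems"(1) by fastforce
  moreover have "{e \<in> path_edges (a # b # P). v \<in> e} =
      (if v \<in> {a, b} then insert {a, b} else id) {e \<in> path_edges (b # P). v \<in> e}"
    by (auto simp: path_edges_Cons_Cons)
  ultimately have "path_deg (a # b # P) v = (if v \<in> {a, b} then 1 else 0) + path_deg (b # P) v"
    using finite_path_edges[of "b # P"] by (simp add: path_deg_def)
  moreover have "path_deg (b # P) v =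
      (if v \<notin> set (b # P) then 0 else if v = b \<or> v = last (b # P) then 1 else 2)" if "P \<noteq> []"
    using "3.IH"(2) "3.prems" that by (simp add: Suc_le_eq)
  moreover have "path_deg [b] v = 0"
    by (simp add: path_deg_def path_edges_def)
  ultimately show ?case
    using "3.prems" by (cases "P = []") auto
qed simp_all

lemma path_deg_rev:
  assumes "distinct P" "2 \<le> length P"
  shows "path_deg (rev P) v = path_deg P v"
proof -
  have "P \<noteq> []" using assms(2) by auto
  then show ?thesis
    using assms path_deg_eq[of P v] path_deg_eq[of "rev P" v] by (auto simp: hd_rev last_rev)
qed

lemma endpoint_if_odd_sum_path_deg:
  assumes "\<forall>P\<in>\<Q>. distinct P \<and> 2 \<le> length P" "odd (\<Sum>P\<in>\<Q>. path_deg P v)"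
  shows "\<exists>P\<in>\<Q>. v = hd P \<or> v = last P"
proof -
  obtain P where "P \<in> \<Q>" "odd (path_deg P v)"
    using assms(2) dvd_sum[of \<Q> 2 "\<lambda>P. path_deg P v"] by blast
  then show ?thesis
    using assms(1) path_deg_eq[of P v] by (auto split: if_splits)
qed

lemma card_odd_sum_path_deg_le:
  assumes "finite \<Q>" "\<forall>P\<in>\<Q>. distinct P \<and> 2 \<le> length P"
  shows "card {v \<in> A. odd (\<Sum>P\<in>\<Q>. path_deg P v)} \<le> 2 * card \<Q>"
proof -
  have "card {v \<in> A. odd (\<Sum>P\<in>\<Q>. path_deg P v)} \<le> card (\<Union>P\<in>\<Q>. {hd P, last P})"
    by (rule card_mono) (use assms endpoint_if_odd_sum_path_deg in auto)
  also have "\<dots> \<le> (\<Sum>P\<in>\<Q>. card {hd P, last P})"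
    by (rule card_UN_le[OF assms(1)])
  also have "\<dots> \<le> (\<Sum>P\<in>\<Q>. 2)"
    by (rule sum_mono) (simp add: card_insert_le_m1)
  finally show ?thesis by simp
qed

lemma finite_path_partition:
  assumes "graph V E" "path_partition V E \<P>"
  shows "finite \<P>"
proof -
  have "E \<subseteq> Pow V" "finite V"
    using assms(1) by (auto simp: graph_def)
  then have "finite (Pow E)"
    by (meson finite_Pow_iff finite_subset)
  moreover have "path_edges ` \<P> \<subseteq> Pow E"
    using assms(2) by (auto simp: path_partition_def)
  moreover have "path_edges P \<noteq> {}" if "P \<in> \<P>" for P
  proof -
    have "2 \<le> length P"
      using assms(2) that by (auto simp: path_partition_def is_path_def)
    then have "{P ! 0, P ! 1} \<in> path_edges P"
      unfolding path_edges_def by force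
    then show ?thesis by blast
  qed
  then have "inj_on path_edges \<P>"
    using assms(2) unfolding path_partition_def pairwise_def inj_on_def by fastforce
  ultimately show ?thesis
    by (meson finite_imageD finite_subset)
qed

lemma deg_eq_sum_path_deg:
  assumes "path_partition V E \<P>" "finite \<P>"
  shows "deg E v = (\<Sum>P\<in>\<P>. path_deg P v)"
proof -
  have "{e \<in> E. v \<in> e} = (\<Union>P\<in>\<P>. {e \<in> path_edges P. v \<in> e})"
    using assms(1) by (auto simp: path_partition_def)
  moreover have "pairwise (\<lambda>P Q. path_edges P \<inter> path_edges Q = {}) \<P>"
    using assms(1) by (simp add: path_partition_def)
  then have "card (\<Union>P\<in>\<P>. {e \<in> path_edges P. v \<in> e}) = (\<Sum>P\<in>\<P>. path_deg P v)"
    unfolding path_deg_def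
    by (intro card_UN_disjoint[OF assms(2)]) (auto simp: finite_path_edges pairwise_def)
  ultimately show ?thesis
    by (simp add: deg_def)
qed

lemma card_odd_parity_exchange:
  fixes g s h :: "'a \<Rightarrow> nat"
  assumes "finite A" "\<And>v. v \<in> A \<Longrightarrow> g v = s v + h v"
  shows "card {v \<in> A. odd (h v)} + card {v \<in> A. odd (g v) \<and> odd (s v)} =
         card {v \<in> A. odd (g v)} + card {v \<in> A. even (g v) \<and> odd (s v)}"
proof -
  have "{v \<in> A. odd (h v)} \<union> {v \<in> A. odd (g v) \<and> odd (s v)} =
        {v \<in> A. odd (g v)} \<union> {v \<in> A. even (g v) \<and> odd (s v)}"
    using assms(2) by auto
  moreover have "{v \<in> A. odd (h v)} \<inter> {v \<in> A. odd (g v) \<and> odd (s v)} = {}"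
    using assms(2) by auto
  moreover have "{v \<in> A. odd (g v)} \<inter> {v \<in> A. even (g v) \<and> odd (s v)} = {}"
    by auto
  ultimately show ?thesis
    using assms(1) by (simp add: card_Un_disjoint[symmetric])
qed

definition terminal_symbol ::
  "'a set \<Rightarrow> 'a set set \<Rightarrow> nat \<Rightarrow> (nat \<Rightarrow> 'a) \<Rightarrow> 'a \<Rightarrow> 'a + nat" where
  "terminal_symbol V E l f v =
     (if v \<in> closed_nbhd V E (V4 V E) then Inl v else Inr (inv_into {1..l} f v))"

lemma trace_of_eq_map_terminal_symbol:
  "trace_of V E U l f P = map (terminal_symbol V E l f) (filter (\<lambda>v. v \<in> U) P)"
  by (simp add: trace_of_def terminal_symbol_def)

lemma bij_betw_terminal_symbol:
  assumes "closed_nbhd V E (V4 V E) \<subseteq> U"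
    and "bij_betw f {1..l} (U - closed_nbhd V E (V4 V E))"
  shows "bij_betw (terminal_symbol V E l f) U (symbols V E l)"
proof (rule bij_betw_byWitness[where f' = "case_sum id f"])
  show "\<forall>v\<in>U. case_sum id f (terminal_symbol V E l f v) = v"
    using assms(2) by (auto simp: terminal_symbol_def bij_betw_inv_into_right)
  show "\<forall>y\<in>symbols V E l. terminal_symbol V E l f (case_sum id f y) = y"
    using assms(2) by (auto simp: symbols_def terminal_symbol_def bij_betw_inv_into_left
        dest: bij_betwE)
  show "terminal_symbol V E l f ` U \<subseteq> symbols V E l"
    using assms(2) bij_betw_inv_into[OF assms(2)]
    by (auto simp: symbols_def terminal_symbol_def dest: bij_betwE)
  show "case_sum id f ` symbols V E l \<subseteq> U"
    using assms by (auto simp: symbols_def dest: bij_betwE)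
qed

lemma pat_D_terminal_symbol:
  assumes "bij_betw f {1..l} (U - closed_nbhd V E (V4 V E))"
    and "\<forall>i\<in>{1..l}. d i = deg E (f i)" "v \<in> U"
  shows "pat_D E d (terminal_symbol V E l f v) = deg E v"
  using assms bij_betw_inv_into[OF assms(1)]
  by (auto simp: pat_D_def terminal_symbol_def bij_betw_inv_into_right dest: bij_betwE)

lemma trace_deg_map_filter:
  assumes "inj_on g U" "xs \<noteq> []" "hd xs \<in> U" "last xs \<in> U" "v \<in> U"
  shows "trace_deg (map g (filter (\<lambda>x. x \<in> U) xs)) (g v) =
         (if v \<notin> set xs then 0 else if v = hd xs \<or> v = last xs then 1 else 2)"
proof -
  let ?L = "filter (\<lambda>x. x \<in> U) xs"
  have "?L \<noteq> []"
    using assms(2,3) by (metis filter_empty_conv hd_in_set)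
  moreover have "hd ?L = hd xs"
    using assms(2,3) by (cases xs) auto
  moreover have "last ?L = last xs"
    using assms(2,4) by (induction xs rule: rev_induct) auto
  moreover have "g v \<in> g ` set ?L \<longleftrightarrow> v \<in> set xs"
    using assms(1,5) by (auto dest: inj_onD)
  ultimately show ?thesis
    using assms by (simp add: trace_deg_def hd_map last_map inj_on_eq_iff)
qed

lemma trace_deg_trace_of:
  assumes "closed_nbhd V E (V4 V E) \<subseteq> U"
    and "bij_betw f {1..l} (U - closed_nbhd V E (V4 V E))"
    and "distinct P" "2 \<le> length P" "hd P \<in> U" "last P \<in> U" "v \<in> U"
  shows "trace_deg (trace_of V E U l f P) (terminal_symbol V E l f v) = path_deg P v"
proof -
  have "inj_on (terminal_symbol V E l f) U"
    using bij_betw_terminal_symbol[OF assms(1,2)] by (rule bij_betw_imp_inj_on)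
  moreover have "P \<noteq> []"
    using assms(4) by auto
  ultimately have "trace_deg (trace_of V E U l f P) (terminal_symbol V E l f v) =
      (if v \<notin> set P then 0 else if v = hd P \<or> v = last P then 1 else 2)"
    unfolding trace_of_eq_map_terminal_symbol using assms(5-7) by (rule trace_deg_map_filter)
  then show ?thesis
    using path_deg_eq[OF assms(3,4)] by simp
qed

lemma card_encodes: "encodes V E l \<T> d \<Q> \<Longrightarrow> card \<T> = card \<Q>"
  by (auto simp: encodes_def card_image)

lemma odd_pattern_encodes:
  assumes "encodes V E l \<T> d \<Q>" "\<forall>P\<in>\<Q>. distinct P \<and> 2 \<le> length P"
  shows "odd_pattern V E l \<T> d =
           int (card {v \<in> V. even (deg E v) \<and> odd (\<Sum>P\<in>\<Q>. path_deg P v)})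
         - int (card {v \<in> V. odd (deg E v) \<and> odd (\<Sum>P\<in>\<Q>. path_deg P v)})"
proof -
  let ?N = "closed_nbhd V E (V4 V E)"
  obtain U f ori where tc: "terminal_collection V E \<Q> U"
    and bij: "bij_betw f {1..l} (U - ?N)"
    and inj: "inj_on (\<lambda>P. trace_of V E U l f (if ori P then P else rev P)) \<Q>"
    and \<T>_eq: "\<T> = (\<lambda>P. trace_of V E U l f (if ori P then P else rev P)) ` \<Q>"
    and d_deg: "\<forall>i\<in>{1..l}. d i = deg E (f i)"
    using assms(1) unfolding encodes_def by blast
  have UV: "U \<subseteq> V" and NU: "?N \<subseteq> U" and ends: "\<forall>P\<in>\<Q>. hd P \<in> U \<and> last P \<in> U"
    using tc by (auto simp: terminal_collection_def)
  let ?sym = "terminal_symbol V E l f"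
  define s where "s v = (\<Sum>P\<in>\<Q>. path_deg P v)" for v
  have sym_bij: "bij_betw ?sym U (symbols V E l)"
    using NU bij by (rule bij_betw_terminal_symbol)
  have pat_S_sym: "pat_S \<T> (?sym v) = s v" if "v \<in> U" for v
  proof -
    have "pat_S \<T> (?sym v) =
        (\<Sum>P\<in>\<Q>. trace_deg (trace_of V E U l f (if ori P then P else rev P)) (?sym v))"
      unfolding pat_S_def \<T>_eq using inj by (simp add: sum.reindex)
    also have "\<dots> = s v"
      unfolding s_def using assms(2) ends that NU bij
      by (intro sum.cong) (auto simp: trace_deg_trace_of path_deg_rev hd_rev last_rev)
    finally show ?thesis .
  qed
  \<comment> \<open>Only terminal vertices can have odd s, since every path of \<open>\<Q>\<close> ends in U.\<close>
  have odd_s_in_U: "v \<in> U" if "odd (s v)" for v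
    using endpoint_if_odd_sum_path_deg[OF assms(2)] that ends unfolding s_def by blast
  have card_symbols:
    "card {y \<in> symbols V E l. R (pat_D E d y) (pat_S \<T> y)} = card {v \<in> V. R (deg E v) (s v)}"
    if "\<And>a b. R a b \<Longrightarrow> odd b" for R
  proof -
    have "bij_betw ?sym {v \<in> U. R (deg E v) (s v)}
        {y \<in> symbols V E l. R (pat_D E d y) (pat_S \<T> y)}"
      using sym_bij by (rule bij_betw_Collect)
        (simp add: pat_S_sym pat_D_terminal_symbol[OF bij d_deg])
    then have "card {v \<in> U. R (deg E v) (s v)} =
        card {y \<in> symbols V E l. R (pat_D E d y) (pat_S \<T> y)}"
      by (rule bij_betw_same_card)
    moreover have "{v \<in> U. R (deg E v) (s v)} = {v \<in> V. R (deg E v) (s v)}"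
      using UV odd_s_in_U that by blast
    ultimately show ?thesis
      by simp
  qed
  show ?thesis
    unfolding odd_pattern_def s_def[symmetric]
    by (subst (1 2) card_symbols) auto
qed

theorem lemma21:
  fixes V :: "'a set" and E :: "'a set set" and \<P> :: "'a list set"
    and l :: nat and \<T> :: "('a + nat) list set" and d :: "nat \<Rightarrow> nat"
  assumes "graph V E"
    and "nice V E"
    and "path_partition V E \<P>"
    and "is_pattern V E l \<T> d"
    and "encodes V E l \<T> d {P\<in>\<P>. set P \<inter> V4 V E \<noteq> {}}"
  shows "real (card \<P>) \<ge>
           (real (odd_vertices V E) + real_of_int (odd_pattern V E l \<T> d)) / 2 + real (card \<T>)"
proof -
  define \<P>\<^sub>4 where "\<P>\<^sub>4 = {P\<in>\<P>. set P \<inter> V4 V E \<noteq> {}}"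
  define s where "s v = (\<Sum>P\<in>\<P>\<^sub>4. path_deg P v)" for v
  define h where "h v = (\<Sum>P\<in>\<P> - \<P>\<^sub>4. path_deg P v)" for v
  have fin: "finite \<P>"
    using assms(1,3) by (rule finite_path_partition)
  have paths: "\<forall>P\<in>\<P>. distinct P \<and> 2 \<le> length P"
    using assms(3) by (auto simp: path_partition_def is_path_def)
  have "\<P>\<^sub>4 \<subseteq> \<P>"
    by (auto simp: \<P>\<^sub>4_def)
  then have "deg E v = s v + h v" for v
    using deg_eq_sum_path_deg[OF assms(3) fin] sum.subset_diff[OF _ fin]
    by (simp add: s_def h_def add.commute)
  then have "card {v \<in> V. odd (h v)} + card {v \<in> V. odd (deg E v) \<and> odd (s v)} =
             odd_vertices V E + card {v \<in> V. even (deg E v) \<and> odd (s v)}"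
    using assms(1) card_odd_parity_exchange[where A = V and g = "deg E" and s = s and h = h]
    by (simp add: odd_vertices_def graph_def)
  moreover have "card {v \<in> V. odd (h v)} \<le> 2 * card (\<P> - \<P>\<^sub>4)"
    unfolding h_def using fin paths by (intro card_odd_sum_path_deg_le) auto
  moreover have "odd_pattern V E l \<T> d = int (card {v \<in> V. even (deg E v) \<and> odd (s v)})
                                         - int (card {v \<in> V. odd (deg E v) \<and> odd (s v)})"
    unfolding s_def using assms(5) paths by (intro odd_pattern_encodes) (auto simp: \<P>\<^sub>4_def)
  moreover have "card \<T> = card \<P>\<^sub>4"
    using assms(5) unfolding \<P>\<^sub>4_def by (rule card_encodes)
  moreover have "card \<P> = card \<P>\<^sub>4 + card (\<P> - \<P>\<^sub>4)"
    using \<open>\<P>\<^sub>4 \<subseteq> \<P>\<close> fin by (simp add: card_Diff_subset card_mono finite_subset)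
  ultimately show ?thesis
    by simp
qed

end
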